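(* Let $p,q\in(0,1/2)$ and let $S_1(x)=px$, $S_2(x)=qx$, $S_3(x)=px+1-p$, $S_4(x)=qx+1-q$ be maps $\mathbb R\to\mathbb R$. Let $K=K_{pq}$ be the attractor of $\{S_1,S_2,S_3,S_4\}$ and $A=S_3(K)\cup S_4(K)$. Then: (i) $S_1S_2=S_2S_1$ and $S_3S_4=S_4S_3$; (ii) $K=\omega(K)$, where $\omega(x)=1-x$; (iii) for $i=1,2$ and any integers $m\neq n$, $S_i^m(A)\cap S_i^n(A)=\varnothing$; (iv) for any integers $m,n\ge 0$, $S_1^mS_2^n(K)\subseteq S_1^m(K)\cap S_2^n(K)$; (v) $K\setminus\{0\}=\bigcup_{m,n=0}^{\infty}S_1^mS_2^n(A)$.
   Context: The attractor of a finite system of contractions $\{S_1,\dots,S_m\}$ of $\mathbb R$ is the unique nonempty compact set $K$ with $K=\bigcup_i S_i(K)$. Powers $S_i^m$ denote $m$-fold composition (with $S_i^0=\mathrm{Id}$ and negative powers meaning powers of the inverse map). *)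

theory Defs
  imports "HOL-Analysis.Analysis"
begin

definition attractor :: "(real \<Rightarrow> real) set \<Rightarrow> real set" where
  "attractor Ss = (THE K. K \<noteq> {} \<and> compact K \<and> K = (\<Union>S\<in>Ss. S ` K))"

definition int_pow :: "(real \<Rightarrow> real) \<Rightarrow> int \<Rightarrow> (real \<Rightarrow> real)" where
  "int_pow f m = (if 0 \<le> m then f ^^ nat m else (inv f) ^^ nat (- m))"

end

theory Submission
  imports Defs
begin

text \<open>Any two nonempty compact sets invariant under a family of contractions coincide, so the
attractor can be identified with the decreasing intersection of the iterates of [0,1]. The
reflection x \<mapsto> 1 - x conjugates S1, S2 to S3, S4, so it maps the attractor to an invariant
set, which must be the attractor itself. The right copies A lie in (1/2, 1], a fundamental
domain for both scalings x \<mapsto> p x and x \<mapsto> q x; this gives the disjointness of their powers,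
and, since undoing a scaling enlarges a point of K by a factor at least 1 / max p q while K
stays inside [0,1], every nonzero point of K is carried into A by finitely many such steps.\<close>

lemma invariant_compact_subset:
  fixes Ss :: "('a::metric_space \<Rightarrow> 'a) set"
  assumes contr: "\<And>S x y. S \<in> Ss \<Longrightarrow> dist (S x) (S y) \<le> c * dist x y"
    and c: "0 \<le> c" "c < 1"
    and K: "compact K" "K = (\<Union>S\<in>Ss. S ` K)"
    and L: "compact L" "L \<noteq> {}" "L = (\<Union>S\<in>Ss. S ` L)"
  shows "K \<subseteq> L"
proof
  fix x assume "x \<in> K"
  define D where "D = diameter (K \<union> L)"
  have bdd: "bounded (K \<union> L)" using K L compact_imp_bounded by blast
  have approx: "\<forall>x\<in>K. \<exists>z\<in>L. dist z x \<le> c ^ n * D" for n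
  proof (induction n)
    case 0
    obtain z where "z \<in> L" using L by blast
    then show ?case unfolding D_def using diameter_bounded_bound[OF bdd] by auto
  next
    case (Suc n)
    show ?case
    proof
      fix x assume "x \<in> K"
      then obtain S y where S: "S \<in> Ss" "y \<in> K" "x = S y" using K(2) by blast
      with Suc obtain z where z: "z \<in> L" "dist z y \<le> c ^ n * D" by blast
      have "dist (S z) x \<le> c * dist z y" using contr S by simp
      also have "\<dots> \<le> c ^ Suc n * D" using mult_left_mono[OF z(2) c(1)] by simp
      finally show "\<exists>z\<in>L. dist z x \<le> c ^ Suc n * D" using z S L(3) by blast
    qed
  qed
  then have "\<forall>n. \<exists>z. z \<in> L \<and> dist z x \<le> c ^ n * D" using \<open>x \<in> K\<close> by blast
  then obtain f where f: "\<And>n. f n \<in> L" "\<And>n. dist (f n) x \<le> c ^ n * D" by metis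
  have "\<forall>n. norm (dist (f n) x) \<le> c ^ n * D" using f by simp
  moreover have "(\<lambda>n. c ^ n * D) \<longlonglongrightarrow> 0"
    using c by (intro tendsto_mult_left_zero LIMSEQ_power_zero) auto
  ultimately have "(\<lambda>n. dist (f n) x) \<longlonglongrightarrow> 0"
    by (rule Lim_null_comparison[OF always_eventually])
  then have "f \<longlonglongrightarrow> x" using tendsto_dist_iff by blast
  then show "x \<in> L" using closed_sequentially[of L f x] f L compact_imp_closed by blast
qed

lemma INT_UN_image_decseq:
  assumes "finite Ss" "decseq X" "\<And>S. S \<in> Ss \<Longrightarrow> inj_on S (X 0)"
  shows "(\<Inter>n. \<Union>S\<in>Ss. S ` X n) = (\<Union>S\<in>Ss. S ` (\<Inter>n. X n))"
proof
  show "(\<Inter>n. \<Union>S\<in>Ss. S ` X n) \<subseteq> (\<Union>S\<in>Ss. S ` (\<Inter>n. X n))"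
  proof
    fix x assume x: "x \<in> (\<Inter>n. \<Union>S\<in>Ss. S ` X n)"
    have "\<exists>S\<in>Ss. \<forall>n. x \<in> S ` X n"
    proof (rule ccontr)
      assume "\<not> ?thesis"
      then obtain N where N: "\<And>S. S \<in> Ss \<Longrightarrow> x \<notin> S ` X (N S)" by metis
      obtain S where S: "S \<in> Ss" "x \<in> S ` X (Max (N ` Ss))" using x by blast
      have "X (Max (N ` Ss)) \<subseteq> X (N S)" using \<open>decseq X\<close> S(1) assms(1) by (simp add: decseq_def)
      then show False using N S by blast
    qed
    then obtain S where S: "S \<in> Ss" "\<And>n. x \<in> S ` X n" by blast
    then obtain y where y: "y \<in> X 0" "x = S y" by blast
    have "y \<in> X n" for n
    proof -
      obtain z where "z \<in> X n" "x = S z" using S(2) by blast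
      moreover have "X n \<subseteq> X 0" using \<open>decseq X\<close> by (simp add: decseq_def)
      ultimately show ?thesis using assms(3)[OF S(1)] y by (metis inj_onD subsetD)
    qed
    then show "x \<in> (\<Union>S\<in>Ss. S ` (\<Inter>n. X n))" using S(1) y by blast
  qed
qed blast

lemma invariant_compact_exists:
  fixes Ss :: "('a::t2_space \<Rightarrow> 'a) set"
  assumes "finite Ss"
    and cont: "\<And>S. S \<in> Ss \<Longrightarrow> continuous_on I S"
    and inj: "\<And>S. S \<in> Ss \<Longrightarrow> inj_on S I"
    and into: "\<And>S. S \<in> Ss \<Longrightarrow> S ` I \<subseteq> I"
    and I: "compact I"
    and fixpoint: "T \<in> Ss" "z \<in> I" "T z = z"
  shows "\<exists>K. compact K \<and> K \<noteq> {} \<and> K \<subseteq> I \<and> K = (\<Union>S\<in>Ss. S ` K)"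
proof -
  define F where "F X = (\<Union>S\<in>Ss. S ` X)" for X
  define X where "X n = (F ^^ n) I" for n
  have "F X \<subseteq> F Y" if "X \<subseteq> Y" for X Y
    using that by (auto simp: F_def)
  moreover have "F I \<subseteq> I" using into by (auto simp: F_def)
  ultimately have X_Suc: "X (Suc n) \<subseteq> X n" for n
    by (induction n) (auto simp: X_def)
  then have dec: "decseq X" by (rule decseq_SucI)
  have X0: "X 0 = I" by (simp add: X_def)
  have XI: "X n \<subseteq> I" for n
    using decseqD[OF dec, of 0 n] X0 by simp
  have "compact (X n)" for n
  proof (induction n)
    case (Suc n)
    have "X (Suc n) = (\<Union>S\<in>Ss. S ` X n)" by (simp add: X_def F_def)
    then show ?case
      using Suc XI by (auto intro!: compact_UN \<open>finite Ss\<close> compact_continuous_image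
          continuous_on_subset[OF cont])
  qed (simp add: X0 I)
  then have "closed (\<Inter>n. X n)" by (simp add: closed_INT compact_imp_closed)
  with I have "compact (I \<inter> (\<Inter>n. X n))" by (rule compact_Int_closed)
  moreover have "I \<inter> (\<Inter>n. X n) = (\<Inter>n. X n)" using XI by blast
  ultimately have "compact (\<Inter>n. X n)" by simp
  moreover have "z \<in> X n" for n
  proof (induction n)
    case (Suc n)
    then have "T z \<in> T ` X n" by blast
    then show ?case using fixpoint by (auto simp: X_def F_def)
  qed (simp add: X0 fixpoint)
  then have "(\<Inter>n. X n) \<noteq> {}" by blast
  moreover have "(\<Inter>n. X n) \<subseteq> I" using X0 by blast
  moreover have "(\<Union>S\<in>Ss. S ` (\<Inter>n. X n)) = (\<Inter>n. X n)"
  proof -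
    have "(\<Union>S\<in>Ss. S ` (\<Inter>n. X n)) = (\<Inter>n. F (X n))"
      using INT_UN_image_decseq[OF \<open>finite Ss\<close> dec] inj X0 by (simp add: F_def)
    also have "\<dots> = (\<Inter>n. X (Suc n))" by (simp add: X_def)
    also have "\<dots> = (\<Inter>n. X n)" using X_Suc X0 by blast
    finally show ?thesis .
  qed
  ultimately show ?thesis by metis
qed

lemma attractor_eqI:
  fixes Ss :: "(real \<Rightarrow> real) set"
  assumes contr: "\<And>S x y. S \<in> Ss \<Longrightarrow> \<bar>S x - S y\<bar> \<le> c * \<bar>x - y\<bar>" and "0 \<le> c" "c < 1"
    and "compact K" "K \<noteq> {}" "K = (\<Union>S\<in>Ss. S ` K)"
  shows "attractor Ss = K"
  unfolding attractor_def
proof (rule the_equality)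
  fix L assume "L \<noteq> {} \<and> compact L \<and> L = (\<Union>S\<in>Ss. S ` L)"
  then show "L = K"
    using invariant_compact_subset[of Ss c L K] invariant_compact_subset[of Ss c K L] assms
    by (auto simp: dist_real_def)
qed (use assms in auto)

lemma funpow_scaling: "(\<lambda>x::'a::monoid_mult. c * x) ^^ n = (\<lambda>x. c ^ n * x)"
  by (induction n) (auto simp: mult.assoc)

lemma int_pow_scaling:
  fixes r :: real
  assumes "0 < r"
  shows "int_pow (\<lambda>x. r * x) m = (\<lambda>x. r powr of_int m * x)"
proof (cases "0 \<le> m")
  case True
  then have "r powr of_int m = r ^ nat m"
    using assms by (metis of_nat_nat powr_realpow)
  then show ?thesis
    using True by (simp add: int_pow_def funpow_scaling)
next
  case False
  have "r powr of_int m = inverse (r powr real (nat (- m)))"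
    using False by (simp add: powr_minus[symmetric])
  also have "\<dots> = inverse r ^ nat (- m)"
    using assms by (simp add: powr_realpow power_inverse)
  finally have "r powr of_int m = inverse r ^ nat (- m)" .
  moreover have "inv (\<lambda>x. r * x) = (\<lambda>x. inverse r * x)"
    by (rule inv_equality) (use assms in auto)
  ultimately show ?thesis
    using False by (simp add: int_pow_def funpow_scaling)
qed

lemma funpow_image_subset: "f ` K \<subseteq> K \<Longrightarrow> (f ^^ n) ` K \<subseteq> K"
  by (induction n) (auto simp: image_subset_iff)

lemma funpow_comp_commute:
  assumes "f \<circ> g = g \<circ> f"
  shows "f ^^ m \<circ> g ^^ n = g ^^ n \<circ> f ^^ m"
proof -
  have fg: "f (g x) = g (f x)" for x
    using assms by (metis comp_apply)
  have fm: "(f ^^ m) (g x) = g ((f ^^ m) x)" for x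
    by (induction m) (simp_all add: fg)
  have "(f ^^ m) ((g ^^ n) x) = (g ^^ n) ((f ^^ m) x)" for x
    by (induction n) (simp_all add: fm)
  then show ?thesis by (simp add: fun_eq_iff)
qed

lemma funpow_comp_image_subset:
  assumes "f \<circ> g = g \<circ> f" "f ` K \<subseteq> K" "g ` K \<subseteq> K"
  shows "(f ^^ m \<circ> g ^^ n) ` K \<subseteq> (f ^^ m) ` K \<inter> (g ^^ n) ` K"
proof -
  have "(f ^^ m \<circ> g ^^ n) ` K = (f ^^ m) ` (g ^^ n) ` K" by (simp add: image_comp)
  also have "\<dots> \<subseteq> (f ^^ m) ` K" using funpow_image_subset[OF assms(3)] by blast
  finally have "(f ^^ m \<circ> g ^^ n) ` K \<subseteq> (f ^^ m) ` K" .
  moreover have "(f ^^ m \<circ> g ^^ n) ` K = (g ^^ n) ` (f ^^ m) ` K"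
    by (simp add: funpow_comp_commute[OF assms(1)] image_comp)
  moreover have "\<dots> \<subseteq> (g ^^ n) ` K" using funpow_image_subset[OF assms(2)] by blast
  ultimately show ?thesis by auto
qed

lemma scaled_copies_disjoint:
  fixes r b :: real and A :: "real set"
  assumes r: "0 < r" "r < 1" and A: "A \<subseteq> {r * b<..b}" and "m \<noteq> n"
  shows "int_pow (\<lambda>x. r * x) m ` A \<inter> int_pow (\<lambda>x. r * x) n ` A = {}"
proof -
  have neq: "r powr of_int m * x \<noteq> r powr of_int n * y"
    if "m < n" "x \<in> A" "y \<in> A" for m n x y
  proof -
    have y: "r * b < y" "y \<le> b" and x: "r * b < x" using A that by auto
    then have "(1 - r) * b > 0" by (simp add: algebra_simps)
    then have "0 < b" using r by (simp add: zero_less_mult_iff)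
    then have "0 < y" using r y(1) mult_pos_pos[of r b] by linarith
    have "r ^ nat (n - m) * y \<le> r ^ 1 * b"
      using r \<open>0 < b\<close> \<open>0 < y\<close> y \<open>m < n\<close> by (intro mult_mono power_decreasing) auto
    also have "\<dots> < x" using x by simp
    finally have "r powr of_int m * (r ^ nat (n - m) * y) < r powr of_int m * x"
      using r by simp
    moreover have "r powr of_int m * r ^ nat (n - m) = r powr of_int n"
      using r \<open>m < n\<close> by (simp add: powr_realpow[symmetric] powr_add[symmetric])
    ultimately show ?thesis by (metis mult.assoc order.irrefl)
  qed
  show ?thesis
    using neq[of m n] neq[of n m] \<open>m \<noteq> n\<close> unfolding int_pow_scaling[OF r(1)]
    by (fastforce simp: linorder_neq_iff)
qed

lemma scaled_copies_cover:
  fixes p q :: real and K A :: "real set"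
  assumes p: "0 < p" "p < 1" and q: "0 < q" "q < 1"
    and K: "K \<subseteq> {0..1}" "K = (\<lambda>x. p * x) ` K \<union> (\<lambda>x. q * x) ` K \<union> A"
    and "0 \<notin> A"
  shows "K - {0} = (\<Union>m::nat. \<Union>n::nat. ((\<lambda>x. p * x) ^^ m \<circ> (\<lambda>x. q * x) ^^ n) ` A)"
    (is "_ = ?U")
proof
  have U: "x \<in> ?U \<longleftrightarrow> (\<exists>m n. \<exists>a\<in>A. x = p ^ m * (q ^ n * a))" for x
    by (auto simp: funpow_scaling)
  have "((\<lambda>x. p * x) ^^ m) ` K \<subseteq> K" "((\<lambda>x. q * x) ^^ n) ` K \<subseteq> K" for m n
    using K(2) by (intro funpow_image_subset; blast)+
  then have closed: "p ^ m * (q ^ n * a) \<in> K" if "a \<in> K" for m n a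
    using that unfolding funpow_scaling by blast
  show "?U \<subseteq> K - {0}"
  proof
    fix x assume "x \<in> ?U"
    then obtain m n a where "a \<in> A" "x = p ^ m * (q ^ n * a)" unfolding U by blast
    then show "x \<in> K - {0}" using closed K(2) \<open>0 \<notin> A\<close> p q by auto
  qed
  define c where "c = max p q"
  have c: "0 < c" "c < 1" "p \<le> c" "q \<le> c" using p q by (auto simp: c_def)
  have "\<forall>x\<in>K. c ^ N < x \<longrightarrow> x \<in> ?U" for N
  proof (induction N)
    case 0
    then show ?case using K(1) by auto
  next
    case (Suc N)
    show ?case
    proof (intro ballI impI)
      fix x assume x: "x \<in> K" "c ^ Suc N < x"
      consider "x \<in> A" | r y where "r \<in> {p, q}" "y \<in> K" "x = r * y"
        using K(2) x(1) by blast
      then show "x \<in> ?U"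
      proof cases
        case 1
        then show ?thesis unfolding U by (metis mult_1 power_0)
      next
        case 2
        have "0 \<le> y" using K(1) 2 by auto
        then have "r * y \<le> c * y" using 2 c by (auto intro: mult_right_mono)
        then have "c * c ^ N < c * y" using x 2 by simp
        then have "c ^ N < y" using c by simp
        then obtain m n a where a: "a \<in> A" "y = p ^ m * (q ^ n * a)"
          using Suc.IH 2(2) unfolding U by blast
        have "x = p ^ Suc m * (q ^ n * a) \<or> x = p ^ m * (q ^ Suc n * a)"
          using 2(1,3) a(2) by (auto simp: algebra_simps)
        then show ?thesis unfolding U using a(1) by blast
      qed
    qed
  qed
  show "K - {0} \<subseteq> ?U"
  proof
    fix x assume x: "x \<in> K - {0}"
    then have "0 < x" using K(1) by force
    then obtain N where "c ^ N < x" using real_arch_pow_inv c(2) by blast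
    then show "x \<in> ?U" using \<open>\<forall>x\<in>K. c ^ N < x \<longrightarrow> x \<in> ?U\<close> x by blast
  qed
qed

context
  fixes p q :: real and S1 S2 S3 S4 :: "real \<Rightarrow> real"
  assumes p: "0 < p" "p < 1/2" and q: "0 < q" "q < 1/2"
    and S: "S1 = (\<lambda>x. p * x)" "S2 = (\<lambda>x. q * x)"
      "S3 = (\<lambda>x. p * x + 1 - p)" "S4 = (\<lambda>x. q * x + 1 - q)"
begin

lemma pq_maps_contract:
  assumes "S \<in> {S1, S2, S3, S4}"
  shows "\<bar>S x - S y\<bar> \<le> 1/2 * \<bar>x - y\<bar>"
proof -
  have "\<bar>r * x - r * y\<bar> \<le> 1/2 * \<bar>x - y\<bar>" if "0 < r" "r < 1/2" for r
    using that mult_right_mono[of r "1/2" "\<bar>x - y\<bar>"]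
    by (simp add: abs_mult right_diff_distrib[symmetric])
  then show ?thesis using assms p q S by auto
qed

lemma pq_attractor_basic:
  assumes "K = attractor {S1, S2, S3, S4}"
  shows "compact K" "K \<noteq> {}" "K \<subseteq> {0..1}" "K = S1 ` K \<union> S2 ` K \<union> S3 ` K \<union> S4 ` K"
proof -
  have "\<exists>K. compact K \<and> K \<noteq> {} \<and> K \<subseteq> {0..1} \<and> K = (\<Union>S\<in>{S1, S2, S3, S4}. S ` K)"
  proof (rule invariant_compact_exists[where T = S1 and z = 0])
    show "S ` {0..1} \<subseteq> {0..1}" if "S \<in> {S1, S2, S3, S4}" for S
    proof -
      have "r * x \<in> {0..1}" "r * x + 1 - r \<in> {0..1}" if "0 < r" "r < 1/2" "x \<in> {0..1}" for r x :: real
      proof -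
        have "0 \<le> r * x" "r * x \<le> r" using that mult_left_le[of x r] by auto
        then show "r * x \<in> {0..1}" "r * x + 1 - r \<in> {0..1}"
          using that unfolding atLeastAtMost_iff by linarith+
      qed
      then show ?thesis using that p q S by auto
    qed
  qed (use p q S in \<open>auto intro!: continuous_intros simp: inj_on_def\<close>)
  then obtain K0 where K0: "compact K0" "K0 \<noteq> {}" "K0 \<subseteq> {0..1}"
    "K0 = (\<Union>S\<in>{S1, S2, S3, S4}. S ` K0)" by blast
  have "K = K0"
    using attractor_eqI[OF pq_maps_contract _ _ K0(1,2,4)] assms by simp
  then show "compact K" "K \<noteq> {}" "K \<subseteq> {0..1}" "K = S1 ` K \<union> S2 ` K \<union> S3 ` K \<union> S4 ` K"
    using K0 by auto
qed

lemma pq_attractor_reflection: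
  assumes K: "K = attractor {S1, S2, S3, S4}"
  shows "K = (\<lambda>x. 1 - x) ` K"
proof -
  define w where "w = (\<lambda>x::real. 1 - x)"
  have conj: "w \<circ> S1 = S3 \<circ> w" "w \<circ> S2 = S4 \<circ> w" "w \<circ> S3 = S1 \<circ> w" "w \<circ> S4 = S2 \<circ> w"
    unfolding w_def S by (auto simp: fun_eq_iff algebra_simps)
  note K_props = pq_attractor_basic[OF K]
  have "w ` K = w ` (S1 ` K \<union> S2 ` K \<union> S3 ` K \<union> S4 ` K)" by (rule arg_cong[OF K_props(4)])
  also have "\<dots> = (\<Union>S\<in>{S1, S2, S3, S4}. S ` w ` K)"
    by (auto simp: image_Un image_comp conj)
  finally have inv: "w ` K = (\<Union>S\<in>{S1, S2, S3, S4}. S ` w ` K)" .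
  have cpt: "compact (w ` K)"
    unfolding w_def by (intro compact_continuous_image continuous_intros K_props(1))
  have ne: "w ` K \<noteq> {}" using K_props(2) by simp
  have "attractor {S1, S2, S3, S4} = w ` K"
    by (rule attractor_eqI[OF pq_maps_contract _ _ cpt ne inv]) simp_all
  with K show ?thesis unfolding w_def by (rule trans)
qed

lemma pq_attractor_right_copies:
  assumes "K = attractor {S1, S2, S3, S4}"
  shows "S3 ` K \<union> S4 ` K \<subseteq> {1/2<..1}"
proof -
  have "r * x + 1 - r \<in> {1/2<..1}" if "0 < r" "r < 1/2" "x \<in> {0..1}" for r x :: real
  proof -
    have "0 \<le> r * x" "r * x \<le> r" using that mult_left_le[of x r] by auto
    then show ?thesis using that unfolding greaterThanAtMost_iff by linarith
  qed
  then show ?thesis using pq_attractor_basic(3)[OF assms] p q S by auto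
qed

end

theorem proposition1:
  fixes p q :: real and S1 S2 S3 S4 :: "real \<Rightarrow> real" and K A :: "real set"
  assumes "0 < p" "p < 1/2" "0 < q" "q < 1/2"
    and "S1 = (\<lambda>x. p * x)" "S2 = (\<lambda>x. q * x)"
    and "S3 = (\<lambda>x. p * x + 1 - p)" "S4 = (\<lambda>x. q * x + 1 - q)"
    and "K = attractor {S1, S2, S3, S4}"
    and "A = S3 ` K \<union> S4 ` K"
  shows "(S1 \<circ> S2 = S2 \<circ> S1 \<and> S3 \<circ> S4 = S4 \<circ> S3)
    \<and> K = (\<lambda>x. 1 - x) ` K
    \<and> (\<forall>S\<in>{S1, S2}. \<forall>m n :: int. m \<noteq> n \<longrightarrow>
           int_pow S m ` A \<inter> int_pow S n ` A = {})
    \<and> (\<forall>m n :: nat. (S1 ^^ m \<circ> S2 ^^ n) ` K \<subseteq> (S1 ^^ m) ` K \<inter> (S2 ^^ n) ` K)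
    \<and> K - {0} = (\<Union>m::nat. \<Union>n::nat. (S1 ^^ m \<circ> S2 ^^ n) ` A)"
proof -
  note K = pq_attractor_basic[OF assms(1-9)]
  have commute: "S1 \<circ> S2 = S2 \<circ> S1" "S3 \<circ> S4 = S4 \<circ> S3"
    unfolding assms(5-8) by (auto simp: fun_eq_iff algebra_simps)
  have "A \<subseteq> {1/2<..1}"
    using pq_attractor_right_copies[OF assms(1-9)] assms(10) by simp
  then have A: "A \<subseteq> {p * 1<..1}" "A \<subseteq> {q * 1<..1}" "0 \<notin> A"
    using assms(2,4) by auto
  have disjoint: "\<forall>S\<in>{S1, S2}. \<forall>m n :: int. m \<noteq> n \<longrightarrow> int_pow S m ` A \<inter> int_pow S n ` A = {}"
    using scaled_copies_disjoint[where r = p and b = 1] scaled_copies_disjoint[where r = q and b = 1]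
      A assms(1-6) by auto
  have "S1 ` K \<subseteq> K" "S2 ` K \<subseteq> K" using K(4) by blast+
  then have nested: "(S1 ^^ m \<circ> S2 ^^ n) ` K \<subseteq> (S1 ^^ m) ` K \<inter> (S2 ^^ n) ` K" for m n
    using funpow_comp_image_subset[OF commute(1)] by blast
  have "K = S1 ` K \<union> S2 ` K \<union> A"
    using K(4) assms(10) by (metis Un_assoc)
  then have cover: "K - {0} = (\<Union>m::nat. \<Union>n::nat. (S1 ^^ m \<circ> S2 ^^ n) ` A)"
    using scaled_copies_cover[of p q K A] K(3) A(3) assms(1-6) by simp
  show ?thesis
    using commute pq_attractor_reflection[OF assms(1-9)] disjoint nested cover by blast
qed

end
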